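(* Let $\phi:T_1\times\cdots\times T_k\to T$ be a multi-valued logic gate with Fourier series expansion $\overline{\phi}$. If $\mathrm{cs}(\overline{\phi})=N(\overline{\phi})$, then $\overline{\phi}$ is one-to-one on the interior of $\Delta^{n_1-1}\times\cdots\times\Delta^{n_k-1}$.
   Context: Standard simplex: $\Delta^{m}=\{(t_0,\dots,t_m)\in\mathbb{R}^{m+1}: t_i\ge 0,\ \sum_i t_i=1\}$. For $0\le j\le m$, $\Delta^m_j=\{(t_0,\dots,\widehat{t_j},\dots,t_m): (t_0,\dots,t_m)\in\Delta^m,\ t_j\neq 0\}\subseteq\mathbb{R}^m$ (the hat means the coordinate is omitted). Multi-valued logic gate: $k\ge1$; for $i=1,\dots,k$ a finite set $T_i=\{w(i,0),\dots,w(i,n_i-1)\}$ with $n_i$ elements; a finite set $T=\{v_1,\dots,v_n\}\subset\mathbb{R}^m$; and a function $\phi:T_1\times\cdots\times T_k\to T$. Its Fourier series expansion is $\overline{\phi}:\Delta^{n_1-1}\times\cdots\times\Delta^{n_k-1}\to\mathbb{R}^m$, $\overline{\phi}\big((t_{1,j})_{j=0}^{n_1-1},\dots,(t_{k,j})_{j=0}^{n_k-1}\big)=\sum_{(j_1,\dots,j_k)}\Big(\prod_{s=1}^k t_{s,j_s}\Big)\,\phi(w(1,j_1),\dots,w(k,j_k))$, the sum over all $0\le j_s\le n_s-1$. Put $N=N(\overline{\phi})=n_1+\cdots+n_k-k$. For $z=(w(1,j(z,1)),\dots,w(k,j(z,k)))\in T_1\times\cdots\times T_k$: $C(\overline{\phi},z)=\Delta^{n_1-1}_{j(z,1)}\times\cdots\times\Delta^{n_k-1}_{j(z,k)}\subseteq\mathbb{R}^N$,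 and $f_z:\mathbb{R}^N\to\mathbb{R}^m$ is the polynomial map in the variables $t_{i,j}$ ($1\le i\le k$, $0\le j\le n_i-1$, $j\neq j(z,i)$, ordered lexicographically by $(i,j)$) obtained from the multilinear polynomial formula for $\overline{\phi}$ by substituting $t_{i,j(z,i)}=1-\sum_{0\le j\le n_i-1,\,j\neq j(z,i)}t_{i,j}$. Sign conventions: $\mathrm{sgn}(x)\in\{+1,0,-1\}$ is the usual sign. For $g:\mathbb{R}^N\to\mathbb{R}$ and nonempty $C$, $\mathrm{sign}_C(g)=+1$, $0$, $-1$ if $g>0$, $g=0$, $g<0$ on all of $C$ respectively, and $u$ (formal symbol) otherwise; for differentiable $g$, $\mathrm{Sign}_C(g)=(\mathrm{sign}_C(\partial g/\partial x_1),\dots,\mathrm{sign}_C(\partial g/\partial x_N))$. $S_N$: the set of nonzero $s\in\{-1,0,1\}^N$ whose first nonzero entry is $1$. A tuple $t\in\{1,0,-1,u\}^N$ eliminates $s\in S_N$ if (i) $t_i\ne0$ and $s_i\neq0$ for some $i$; (ii) there is $k\in\{\pm1\}$ with $t_i=ks_i$ whenever $s_i\neq0$ and $t_i\neq0$; (iii) $s_i=0$ whenever $t_i=u$. For a set $X$ of such tuples, $\mathrm{Elim}(X)$ is the set of elements of $S_N$ eliminated by some element of $X$. For convex $C\subseteq\mathbb{R}^N$ and differentiable $f:\mathbb{R}^N\to\mathbb{R}^m$, $\mathrm{Sens}_C(f)$ is the set of $v\in S_N$ such that $\mathrm{Sign}_C(\pi\circ f)$ eliminates $v$ for some differentiable $\pi:\mathbb{R}^m\to\mathbb{R}$.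 Continuous sensitivity: $\mathrm{cs}(\overline{\phi},z)=\log_3\big(3^{N}-2\,|\mathrm{Elim}(S_N\setminus\mathrm{Sens}_{C(\overline{\phi},z)}(f_z))|\big)$ and $\mathrm{cs}(\overline{\phi})=\max_{z\in T_1\times\cdots\times T_k}\mathrm{cs}(\overline{\phi},z)$. *)

theory Defs
  imports "HOL-Analysis.Analysis"
begin

datatype sgnu = SPos | SZero | SNeg | SU

definition int_to_sgnu :: "int \<Rightarrow> sgnu" where
  "int_to_sgnu x = (if x > 0 then SPos else if x = 0 then SZero else SNeg)"

text \<open>sign_C(g) for g : R^N -> R (points of R^N are functions nat => real).\<close>
definition sign_on :: "(nat \<Rightarrow> real) set \<Rightarrow> ((nat \<Rightarrow> real) \<Rightarrow> real) \<Rightarrow> sgnu" where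
  "sign_on C g =
     (if \<forall>x\<in>C. g x > 0 then SPos
      else if \<forall>x\<in>C. g x = 0 then SZero
      else if \<forall>x\<in>C. g x < 0 then SNeg
      else SU)"

text \<open>Partial derivative of g with respect to the coordinate x_p (0-based) at the point x.\<close>
definition partial_deriv :: "((nat \<Rightarrow> real) \<Rightarrow> real) \<Rightarrow> nat \<Rightarrow> (nat \<Rightarrow> real) \<Rightarrow> real" where
  "partial_deriv g p x = deriv (\<lambda>h. g (x(p := x p + h))) 0"

definition Sign_on :: "nat \<Rightarrow> (nat \<Rightarrow> real) set \<Rightarrow> ((nat \<Rightarrow> real) \<Rightarrow> real) \<Rightarrow> sgnu list" where
  "Sign_on N C g = map (\<lambda>p. sign_on C (partial_deriv g p)) [0..<N]"

definition S_set :: "nat \<Rightarrow> int list set" where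
  "S_set N = {s. length s = N \<and> set s \<subseteq> {-1, 0, 1} \<and> (\<exists>i<N. s ! i \<noteq> 0)
                 \<and> (\<forall>i<N. s ! i \<noteq> 0 \<and> (\<forall>j<i. s ! j = 0) \<longrightarrow> s ! i = 1)}"

definition eliminates :: "nat \<Rightarrow> sgnu list \<Rightarrow> int list \<Rightarrow> bool" where
  "eliminates N t s \<longleftrightarrow>
     (\<exists>i<N. t ! i \<noteq> SZero \<and> s ! i \<noteq> 0) \<and>
     (\<exists>\<kappa>\<in>{1, -1::int}. \<forall>i<N. s ! i \<noteq> 0 \<and> t ! i \<noteq> SZero \<longrightarrow> t ! i = int_to_sgnu (\<kappa> * s ! i)) \<and>
     (\<forall>i<N. t ! i = SU \<longrightarrow> s ! i = 0)"

definition Elim :: "nat \<Rightarrow> sgnu list set \<Rightarrow> int list set" where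
  "Elim N X = {s \<in> S_set N. \<exists>t\<in>X. eliminates N t s}"

definition Elim_S :: "nat \<Rightarrow> int list set \<Rightarrow> int list set" where
  "Elim_S N X = Elim N ((map int_to_sgnu) ` X)"

definition Sens :: "nat \<Rightarrow> (nat \<Rightarrow> real) set \<Rightarrow> ((nat \<Rightarrow> real) \<Rightarrow> real ^ 'm) \<Rightarrow> int list set" where
  "Sens N C f = {v \<in> S_set N. \<exists>\<pi> :: real ^ 'm \<Rightarrow> real.
                    (\<forall>y. \<pi> differentiable (at y)) \<and> eliminates N (Sign_on N C (\<pi> \<circ> f)) v}"

text \<open>T_i is identified with the index set {0..<n i} (w(i,j) ~ j), for i < k (0-based);
  a gate is a map phi from index tuples J (J i < n i for i < k) to R^m = real^'m.\<close>

definition idx_tuples :: "nat \<Rightarrow> (nat \<Rightarrow> nat) \<Rightarrow> (nat \<Rightarrow> nat) set" where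
  "idx_tuples k n = PiE {..<k} (\<lambda>i. {..<n i})"

text \<open>The multilinear polynomial formula of the Fourier series expansion (evaluated at any t).\<close>
definition fourier :: "nat \<Rightarrow> (nat \<Rightarrow> nat) \<Rightarrow> ((nat \<Rightarrow> nat) \<Rightarrow> real ^ 'm)
                         \<Rightarrow> (nat \<Rightarrow> nat \<Rightarrow> real) \<Rightarrow> real ^ 'm" where
  "fourier k n \<phi> t = (\<Sum>J\<in>idx_tuples k n. (\<Prod>s<k. t s (J s)) *\<^sub>R \<phi> J)"

definition NN :: "nat \<Rightarrow> (nat \<Rightarrow> nat) \<Rightarrow> nat" where
  "NN k n = (\<Sum>i<k. n i) - k"

text \<open>Offset of block i among the N coordinates (lexicographic order on (i,j)).\<close>
definition blk_off :: "(nat \<Rightarrow> nat) \<Rightarrow> nat \<Rightarrow> nat" where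
  "blk_off n i = (\<Sum>s<i. n s - 1)"

text \<open>Position in R^N of the variable t_{i,j}, j \<noteq> z i.\<close>
definition var_pos :: "(nat \<Rightarrow> nat) \<Rightarrow> (nat \<Rightarrow> nat) \<Rightarrow> nat \<Rightarrow> nat \<Rightarrow> nat" where
  "var_pos n z i j = blk_off n i + (if j < z i then j else j - 1)"

text \<open>Substitution t_{i,z i} = 1 - sum of the other t_{i,j}.\<close>
definition lift :: "(nat \<Rightarrow> nat) \<Rightarrow> (nat \<Rightarrow> nat) \<Rightarrow> (nat \<Rightarrow> real) \<Rightarrow> nat \<Rightarrow> nat \<Rightarrow> real" where
  "lift n z x i j =
     (if j = z i then 1 - (\<Sum>j'\<in>{..<n i} - {z i}. x (var_pos n z i j'))
      else x (var_pos n z i j))"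

definition f_z :: "nat \<Rightarrow> (nat \<Rightarrow> nat) \<Rightarrow> ((nat \<Rightarrow> nat) \<Rightarrow> real ^ 'm) \<Rightarrow> (nat \<Rightarrow> nat)
                    \<Rightarrow> (nat \<Rightarrow> real) \<Rightarrow> real ^ 'm" where
  "f_z k n \<phi> z x = fourier k n \<phi> (lift n z x)"

text \<open>C(phibar, z) = Delta_{z 1} x ... x Delta_{z k} inside R^N.\<close>
definition C_set :: "nat \<Rightarrow> (nat \<Rightarrow> nat) \<Rightarrow> (nat \<Rightarrow> nat) \<Rightarrow> (nat \<Rightarrow> real) set" where
  "C_set k n z = {x. (\<forall>p\<ge>NN k n. x p = 0) \<and>
                     (\<forall>i<k. (\<forall>j<n i. lift n z x i j \<ge> 0) \<and> lift n z x i (z i) \<noteq> 0)}"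

definition cs_at :: "nat \<Rightarrow> (nat \<Rightarrow> nat) \<Rightarrow> ((nat \<Rightarrow> nat) \<Rightarrow> real ^ 'm) \<Rightarrow> (nat \<Rightarrow> nat) \<Rightarrow> real" where
  "cs_at k n \<phi> z =
     (let N = NN k n in
      log 3 (3 ^ N - 2 * real (card (Elim_S N (S_set N - Sens N (C_set k n z) (f_z k n \<phi> z))))))"

definition cs :: "nat \<Rightarrow> (nat \<Rightarrow> nat) \<Rightarrow> ((nat \<Rightarrow> nat) \<Rightarrow> real ^ 'm) \<Rightarrow> real" where
  "cs k n \<phi> = Max (cs_at k n \<phi> ` idx_tuples k n)"

definition open_simplex_prod :: "nat \<Rightarrow> (nat \<Rightarrow> nat) \<Rightarrow> (nat \<Rightarrow> nat \<Rightarrow> real) set" where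
  "open_simplex_prod k n =
     PiE {..<k} (\<lambda>i. {t \<in> extensional {..<n i}. (\<forall>j<n i. t j > 0) \<and> (\<Sum>j<n i. t j) = 1})"

end

theory Submission
  imports Defs
begin

text \<open>
  Since 2 |S_N| < 3^N, the equality cs(phibar, z) = N at a maximising vertex z forces
  Elim(S_N - Sens) to be empty, so every sign pattern is sensitive for f_z. Two interior
  points with the same image become points x \<noteq> y of the convex set C(phibar, z), and the sign
  pattern of y - x is eliminated by Sign(\<pi> \<circ> f_z) for a differentiable \<pi>. Up to a global
  sign, \<pi> \<circ> f_z then has positive derivative all along the segment from x to y, so
  \<pi> (f_z x) \<noteq> \<pi> (f_z y).
\<close>

lemma S_set_first_nonzero:
  assumes "s \<in> S_set N"
  obtains i where "i < N" "s ! i = 1" "\<forall>j<i. s ! j = 0"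
proof -
  from assms obtain i0 where i0: "i0 < N" "s ! i0 \<noteq> 0"
    unfolding S_set_def by blast
  define i where "i = (LEAST i. s ! i \<noteq> 0)"
  have nz: "s ! i \<noteq> 0" and zero: "\<forall>j<i. s ! j = 0"
    using LeastI[of "\<lambda>i. s ! i \<noteq> 0", OF i0(2)] not_less_Least unfolding i_def by blast+
  have "i < N" using Least_le[of "\<lambda>i. s ! i \<noteq> 0", OF i0(2)] i0(1) unfolding i_def by linarith
  with assms nz zero show thesis
    by (intro that) (auto simp: S_set_def)
qed

lemma finite_S_set: "finite (S_set N)"
  by (rule finite_subset[of _ "{s. set s \<subseteq> {-1, 0, 1} \<and> length s = N}"])
     (auto simp: S_set_def finite_lists_length_eq)

lemma uminus_notin_S_set:
  assumes "s \<in> S_set N"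
  shows "map uminus s \<notin> S_set N"
proof
  assume s': "map uminus s \<in> S_set N"
  obtain i where i: "i < N" "s ! i = 1" "\<forall>j<i. s ! j = 0"
    using S_set_first_nonzero[OF assms] .
  obtain i' where i': "i' < N" "map uminus s ! i' = 1" "\<forall>j<i'. map uminus s ! j = 0"
    using S_set_first_nonzero[OF s'] .
  have "length s = N" using assms by (simp add: S_set_def)
  then show False
    using i i' by (cases i i' rule: linorder_cases) auto
qed

lemma two_card_S_set_less: "2 * card (S_set N) < 3 ^ N"
proof -
  let ?L = "{s. set s \<subseteq> {-1, 0, 1 :: int} \<and> length s = N}"
  let ?neg = "map (uminus :: int \<Rightarrow> int)"
  have card_L: "card ?L = 3 ^ N"
    using card_lists_length_eq[of "{-1, 0, 1 :: int}" N] by (simp add: numeral_3_eq_3)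
  have zero_notin: "replicate N 0 \<notin> S_set N \<union> ?neg ` S_set N"
  proof
    assume "replicate N 0 \<in> S_set N \<union> ?neg ` S_set N"
    then obtain s i where "s \<in> S_set N" "replicate N 0 \<in> {s, ?neg s}" "i < N" "s ! i \<noteq> 0"
      by (auto simp: S_set_def)
    moreover have "length s = N" using \<open>s \<in> S_set N\<close> by (simp add: S_set_def)
    ultimately show False
      by (auto dest: arg_cong[where f = "\<lambda>xs. xs ! i"])
  qed
  have sub: "insert (replicate N 0) (S_set N \<union> ?neg ` S_set N) \<subseteq> ?L"
    by (fastforce simp: S_set_def)
  have "S_set N \<inter> ?neg ` S_set N = {}"
    using uminus_notin_S_set[of _ N] by (fastforce simp: comp_def)
  moreover have "card (?neg ` S_set N) = card (S_set N)"
    by (rule card_image) (simp add: inj_on_def)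
  ultimately have "card (insert (replicate N 0) (S_set N \<union> ?neg ` S_set N)) = 1 + 2 * card (S_set N)"
    using zero_notin finite_S_set[of N] by (simp add: card_Un_disjoint)
  moreover have "card (insert (replicate N 0) (S_set N \<union> ?neg ` S_set N)) \<le> 3 ^ N"
    using card_mono[OF _ sub] card_L by (simp add: finite_lists_length_eq)
  ultimately show ?thesis by simp
qed

lemma eliminates_self:
  assumes "s \<in> S_set N"
  shows "eliminates N (map int_to_sgnu s) s"
proof -
  from assms obtain i where "i < N" "s ! i \<noteq> 0" and "length s = N"
    unfolding S_set_def by auto
  then show ?thesis
    unfolding eliminates_def by (auto simp: int_to_sgnu_def split: if_splits intro!: exI[of _ i] bexI[of _ 1])
qed

lemma S_set_subset_Sens_if_cs_at_eq:
  assumes "cs_at k n \<phi> z = real (NN k n)"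
  shows "S_set (NN k n) \<subseteq> Sens (NN k n) (C_set k n z) (f_z k n \<phi> z)"
proof -
  let ?N = "NN k n"
  define E where "E = Elim_S ?N (S_set ?N - Sens ?N (C_set k n z) (f_z k n \<phi> z))"
  have "E \<subseteq> S_set ?N" unfolding E_def Elim_S_def Elim_def by blast
  then have "2 * card E < 3 ^ ?N"
    using card_mono[OF finite_S_set] two_card_S_set_less[of ?N] by (meson le_less_trans mult_le_mono2)
  then have pos: "0 < (3::real) ^ ?N - 2 * real (card E)"
    by (metis of_nat_less_iff of_nat_mult of_nat_numeral of_nat_power diff_gt_0_iff_gt)
  have "(3::real) ^ ?N - 2 * real (card E) = 3 powr log 3 (3 ^ ?N - 2 * real (card E))"
    using pos by simp
  also have "\<dots> = 3 ^ ?N"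
    using assms unfolding cs_at_def Let_def E_def by (simp add: powr_realpow)
  finally have "E = {}"
    using finite_subset[OF \<open>E \<subseteq> S_set ?N\<close> finite_S_set] by simp
  then show ?thesis
    unfolding E_def Elim_S_def Elim_def using eliminates_self by blast
qed

lemma cs_eq_NN_imp_S_set_subset_Sens:
  assumes "\<forall>i<k. n i \<ge> 1" and "cs k n \<phi> = real (NN k n)"
  obtains z where "z \<in> idx_tuples k n"
    and "S_set (NN k n) \<subseteq> Sens (NN k n) (C_set k n z) (f_z k n \<phi> z)"
proof -
  have "restrict (\<lambda>_. 0) {..<k} \<in> idx_tuples k n"
    using assms(1) by (auto simp: idx_tuples_def PiE_iff)
  then have "idx_tuples k n \<noteq> {}" by blast
  then have "cs k n \<phi> \<in> cs_at k n \<phi> ` idx_tuples k n"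
    unfolding cs_def by (intro Max_in) (simp_all add: idx_tuples_def finite_PiE)
  then show thesis
    using assms(2) S_set_subset_Sens_if_cs_at_eq that by force
qed

definition int_sgn :: "real \<Rightarrow> int" where
  "int_sgn r = (if r > 0 then 1 else if r < 0 then -1 else 0)"

lemma int_sgn_mult_abs: "of_int (int_sgn r) * \<bar>r\<bar> = r"
  by (simp add: int_sgn_def)

lemma int_sgn_eq_0_iff [simp]: "int_sgn r = 0 \<longleftrightarrow> r = 0"
  by (simp add: int_sgn_def)

text \<open>The representative in S_N of the pair of sign vectors \<plusminus>sgn(v).\<close>
definition sign_pattern :: "nat \<Rightarrow> (nat \<Rightarrow> real) \<Rightarrow> int list" where
  "sign_pattern N v = map (\<lambda>p. int_sgn (v (LEAST q. v q \<noteq> 0)) * int_sgn (v p)) [0..<N]"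

lemma sign_pattern_in_S_set:
  assumes "\<exists>p<N. v p \<noteq> 0"
  shows "sign_pattern N v \<in> S_set N"
proof -
  define p0 where "p0 = (LEAST q. v q \<noteq> 0)"
  from assms obtain p where p: "p < N" "v p \<noteq> 0" by blast
  have p0: "v p0 \<noteq> 0" "\<forall>q<p0. v q = 0"
    using LeastI[of "\<lambda>q. v q \<noteq> 0", OF p(2)] not_less_Least unfolding p0_def by blast+
  have "p0 < N" using Least_le[of "\<lambda>q. v q \<noteq> 0", OF p(2)] p(1) unfolding p0_def by linarith
  have entry: "sign_pattern N v ! q = int_sgn (v p0) * int_sgn (v q)" if "q < N" for q
    using that by (simp add: sign_pattern_def p0_def)
  show ?thesis
    unfolding S_set_def
  proof (intro CollectI conjI allI impI)
    show "set (sign_pattern N v) \<subseteq> {-1, 0, 1}"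
      by (auto simp: sign_pattern_def int_sgn_def split: if_splits)
    show "\<exists>i<N. sign_pattern N v ! i \<noteq> 0"
      using \<open>p0 < N\<close> p0(1) entry by auto
    fix i assume i: "i < N" and first: "sign_pattern N v ! i \<noteq> 0 \<and> (\<forall>j<i. sign_pattern N v ! j = 0)"
    have "i = p0"
      using first entry[OF i] entry[OF \<open>p0 < N\<close>] p0 i \<open>p0 < N\<close>
      by (cases i p0 rule: linorder_cases) auto
    then show "sign_pattern N v ! i = 1"
      using entry[OF i] p0(1) by (auto simp: int_sgn_def)
  qed (simp add: sign_pattern_def)
qed

lemma sign_on_eq_int_to_sgnu_imp_pos:
  assumes "x \<in> C" and "e \<in> {1, -1}" and "sign_on C d = int_to_sgnu e"
  shows "0 < of_int e * d x"
  using assms by (auto simp: sign_on_def int_to_sgnu_def split: if_splits)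

text \<open>
  With c the product of the elimination sign and the sign of the first nonzero entry of v,
  every term c v_p (dg/dx_p) is nonnegative on C, and positive at the eliminating coordinate.
\<close>
lemma eliminates_sign_pattern_imp_directional_pos:
  assumes "\<exists>p<N. v p \<noteq> 0" and "eliminates N (Sign_on N C g) (sign_pattern N v)"
  obtains c :: real where "\<forall>x\<in>C. 0 < c * (\<Sum>p<N. v p * partial_deriv g p x)"
proof -
  let ?s = "sign_pattern N v" and ?t = "Sign_on N C g"
  define \<sigma> where "\<sigma> = int_sgn (v (LEAST q. v q \<noteq> 0))"
  have "\<sigma> \<noteq> 0"
    using LeastI_ex[of "\<lambda>q. v q \<noteq> 0"] assms(1) unfolding \<sigma>_def by auto
  have s: "?s ! p = \<sigma> * int_sgn (v p)" and t: "?t ! p = sign_on C (partial_deriv g p)"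
    if "p < N" for p
    using that by (simp_all add: sign_pattern_def Sign_on_def \<sigma>_def)
  obtain i0 where i0: "i0 < N" "?t ! i0 \<noteq> SZero" "?s ! i0 \<noteq> 0"
    using assms(2) unfolding eliminates_def by blast
  obtain \<kappa> :: int where \<kappa>: "\<kappa> \<in> {1, -1}"
    and agree: "\<forall>i<N. ?s ! i \<noteq> 0 \<and> ?t ! i \<noteq> SZero \<longrightarrow> ?t ! i = int_to_sgnu (\<kappa> * ?s ! i)"
    using assms(2) unfolding eliminates_def by blast
  have no_u: "\<forall>i<N. ?t ! i = SU \<longrightarrow> ?s ! i = 0"
    using assms(2) unfolding eliminates_def by blast
  have term_sign: "0 \<le> of_int (\<kappa> * \<sigma>) * (v p * partial_deriv g p x)
      \<and> (?t ! p \<noteq> SZero \<and> v p \<noteq> 0 \<longrightarrow> 0 < of_int (\<kappa> * \<sigma>) * (v p * partial_deriv g p x))"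
    if "x \<in> C" "p < N" for x p
  proof (cases "v p = 0 \<or> ?t ! p = SZero")
    case True
    then show ?thesis
      using \<open>x \<in> C\<close> t[OF \<open>p < N\<close>] by (auto simp: sign_on_def split: if_splits)
  next
    case False
    let ?e = "\<kappa> * \<sigma> * int_sgn (v p)"
    have "?e \<in> {1, -1}"
      using \<kappa> \<open>\<sigma> \<noteq> 0\<close> False unfolding \<sigma>_def by (auto simp: int_sgn_def)
    moreover have "sign_on C (partial_deriv g p) = int_to_sgnu ?e"
      using agree no_u False s t \<open>p < N\<close> \<open>\<sigma> \<noteq> 0\<close> by (simp add: mult.assoc)
    ultimately have "0 < of_int ?e * partial_deriv g p x"
      using sign_on_eq_int_to_sgnu_imp_pos \<open>x \<in> C\<close> by blast
    then have "0 < \<bar>v p\<bar> * (of_int ?e * partial_deriv g p x)"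
      using False by simp
    also have "\<dots> = of_int (\<kappa> * \<sigma>) * (v p * partial_deriv g p x)"
      using int_sgn_mult_abs[of "v p"] by (simp add: algebra_simps)
    finally show ?thesis
      using False by simp
  qed
  have "0 < of_int (\<kappa> * \<sigma>) * (\<Sum>p<N. v p * partial_deriv g p x)" if "x \<in> C" for x
    unfolding sum_distrib_left
    using term_sign[OF that] i0 s[OF i0(1)]
    by (intro sum_pos2[of _ i0]) auto
  then show thesis
    using that by blast
qed

lemma blk_off_Suc: "blk_off n (Suc i) = blk_off n i + (n i - 1)"
  by (simp add: blk_off_def)

lemma blk_off_mono: "i \<le> i' \<Longrightarrow> blk_off n i \<le> blk_off n i'"
  unfolding blk_off_def by (rule sum_mono2) auto

lemma blk_off_eq_NN:
  assumes "\<forall>i<k. 1 \<le> n i"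
  shows "blk_off n k = NN k n"
proof -
  have "(\<Sum>s<k. n s - 1) + k = (\<Sum>s<k. n s)"
    using assms by (induction k) auto
  then show ?thesis
    unfolding blk_off_def NN_def by simp
qed

lemma var_pos_in_block:
  assumes "j < n i" "j \<noteq> z i" "z i < n i"
  shows "blk_off n i \<le> var_pos n z i j" "var_pos n z i j < blk_off n (Suc i)"
  using assms unfolding var_pos_def blk_off_Suc by auto

lemma var_pos_less_NN:
  assumes "\<forall>i<k. 1 \<le> n i" "i < k" "j < n i" "j \<noteq> z i" "z i < n i"
  shows "var_pos n z i j < NN k n"
proof -
  have "var_pos n z i j < blk_off n (Suc i)"
    using var_pos_in_block assms(3-5) by blast
  also have "\<dots> \<le> blk_off n k"
    using assms(2) by (intro blk_off_mono) simp
  finally show ?thesis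
    using blk_off_eq_NN[OF assms(1)] by simp
qed

lemma var_pos_inject:
  assumes "j < n i" "j \<noteq> z i" "z i < n i" "j' < n i'" "j' \<noteq> z i'" "z i' < n i'"
    and "var_pos n z i j = var_pos n z i' j'"
  shows "i = i' \<and> j = j'"
proof (cases i i' rule: linorder_cases)
  case less
  have "var_pos n z i j < blk_off n (Suc i)" using var_pos_in_block assms(1-3) by blast
  also have "\<dots> \<le> var_pos n z i' j'"
    using less var_pos_in_block(1)[of j' n i' z] assms(4-6) blk_off_mono[of "Suc i" i' n] by linarith
  finally show ?thesis using assms(7) by simp
next
  case greater
  have "var_pos n z i' j' < blk_off n (Suc i')" using var_pos_in_block assms(4-6) by blast
  also have "\<dots> \<le> var_pos n z i j"
    using greater var_pos_in_block(1)[of j n i z] assms(1-3) blk_off_mono[of "Suc i'" i n] by linarith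
  finally show ?thesis using assms(7) by simp
next
  case equal
  then show ?thesis
    using assms(2,5,7) unfolding var_pos_def by (auto split: if_splits)
qed

text \<open>
  The point of C(phibar, z) with coordinates t: the coordinates t_{i, z i}, which lift recomputes,
  are dropped and the others are placed at their positions var_pos.
\<close>
definition drop_coords :: "nat \<Rightarrow> (nat \<Rightarrow> nat) \<Rightarrow> (nat \<Rightarrow> nat) \<Rightarrow> (nat \<Rightarrow> nat \<Rightarrow> real) \<Rightarrow> nat \<Rightarrow> real"
  where "drop_coords k n z t q =
    (\<Sum>(i, j)\<in>Sigma {..<k} (\<lambda>i. {..<n i} - {z i}). if var_pos n z i j = q then t i j else 0)"

lemma drop_coords_var_pos:
  assumes "\<forall>i<k. z i < n i" and "i < k" "j < n i" "j \<noteq> z i"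
  shows "drop_coords k n z t (var_pos n z i j) = t i j"
proof -
  let ?S = "Sigma {..<k} (\<lambda>i. {..<n i} - {z i})"
  have "drop_coords k n z t (var_pos n z i j) = (\<Sum>x\<in>?S. if x = (i, j) then t i j else 0)"
    unfolding drop_coords_def
    using assms var_pos_inject[of _ n _ z j i] by (intro sum.cong) (auto split: if_splits)
  also have "\<dots> = t i j"
    using assms(2-4) by (simp add: finite_SigmaI)
  finally show ?thesis .
qed

lemma drop_coords_eq_0:
  assumes "\<forall>i<k. 1 \<le> n i" and "\<forall>i<k. z i < n i" and "NN k n \<le> q"
  shows "drop_coords k n z t q = 0"
  unfolding drop_coords_def
  using assms var_pos_less_NN[OF assms(1)] by (intro sum.neutral) fastforce

lemma open_simplex_prodD:
  assumes "t \<in> open_simplex_prod k n" "i < k"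
  shows "t i \<in> extensional {..<n i}" "\<forall>j<n i. 0 < t i j" "(\<Sum>j<n i. t i j) = 1"
  using assms unfolding open_simplex_prod_def by (auto simp: PiE_iff)

lemma lift_drop_coords:
  assumes "\<forall>i<k. z i < n i" and t: "t \<in> open_simplex_prod k n" and "i < k" "j < n i"
  shows "lift n z (drop_coords k n z t) i j = t i j"
proof (cases "j = z i")
  case True
  have "(\<Sum>j'\<in>{..<n i} - {z i}. drop_coords k n z t (var_pos n z i j'))
      = (\<Sum>j'\<in>{..<n i} - {z i}. t i j')"
    using assms by (intro sum.cong) (auto intro!: drop_coords_var_pos)
  moreover have "(\<Sum>j<n i. t i j) = t i (z i) + (\<Sum>j'\<in>{..<n i} - {z i}. t i j')"
    using assms by (intro sum.remove) auto
  ultimately show ?thesis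
    using True open_simplex_prodD(3)[OF t \<open>i < k\<close>] unfolding lift_def by simp
next
  case False
  then show ?thesis
    unfolding lift_def using drop_coords_var_pos assms by simp
qed

lemma fourier_eq_f_z_drop_coords:
  assumes "\<forall>i<k. z i < n i" and "t \<in> open_simplex_prod k n"
  shows "fourier k n \<phi> t = f_z k n \<phi> z (drop_coords k n z t)"
  unfolding f_z_def fourier_def
  using assms lift_drop_coords by (intro sum.cong prod.cong) (auto simp: idx_tuples_def PiE_iff)

lemma drop_coords_in_C_set:
  assumes "\<forall>i<k. 1 \<le> n i" and "\<forall>i<k. z i < n i" and "t \<in> open_simplex_prod k n"
  shows "drop_coords k n z t \<in> C_set k n z"
  unfolding C_set_def
  using assms drop_coords_eq_0 lift_drop_coords open_simplex_prodD(2)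
  by (fastforce intro: less_imp_le simp: less_irrefl)

lemma inj_on_drop_coords:
  assumes "\<forall>i<k. z i < n i"
  shows "inj_on (drop_coords k n z) (open_simplex_prod k n)"
proof (rule inj_onI)
  fix a b assume a: "a \<in> open_simplex_prod k n" and b: "b \<in> open_simplex_prod k n"
    and eq: "drop_coords k n z a = drop_coords k n z b"
  show "a = b"
  proof (rule PiE_ext[OF a[unfolded open_simplex_prod_def] b[unfolded open_simplex_prod_def]])
    fix i assume "i \<in> {..<k}"
    then show "a i = b i"
      using open_simplex_prodD(1)[OF a] open_simplex_prodD(1)[OF b]
        lift_drop_coords[OF assms a] lift_drop_coords[OF assms b] eq
      by (intro extensionalityI[of "a i" "{..<n i}"]) auto
  qed
qed

definition lift_linear :: "(nat \<Rightarrow> nat) \<Rightarrow> (nat \<Rightarrow> nat) \<Rightarrow> (nat \<Rightarrow> real) \<Rightarrow> nat \<Rightarrow> nat \<Rightarrow> real" where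
  "lift_linear n z w i j = lift n z w i j - lift n z (\<lambda>_. 0) i j"

lemma lift_linear_eq:
  "lift_linear n z w i j =
    (if j = z i then - (\<Sum>j'\<in>{..<n i} - {z i}. w (var_pos n z i j')) else w (var_pos n z i j))"
  unfolding lift_linear_def lift_def by simp

lemma lift_add_scaled:
  "lift n z (\<lambda>q. x q + t * w q) i j = lift n z x i j + t * lift_linear n z w i j"
  unfolding lift_linear_eq lift_def by (simp add: sum.distrib sum_distrib_left algebra_simps)

lemma sum_indicator_singleton:
  assumes "\<forall>q\<ge>N. v q = 0"
  shows "(\<lambda>q. \<Sum>p<N. v p * indicator {p} q) = (v :: nat \<Rightarrow> real)"
proof
  fix q
  have "(\<Sum>p<N. v p * indicator {p} q) = (\<Sum>p<N. if p = q then v q else 0)"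
    by (intro sum.cong) (auto simp: indicator_def)
  then show "(\<Sum>p<N. v p * indicator {p} q) = v q"
    using assms by simp
qed

lemma lift_linear_sum:
  "lift_linear n z (\<lambda>q. \<Sum>p\<in>P. c p * w p q) i j = (\<Sum>p\<in>P. c p * lift_linear n z (w p) i j)"
  unfolding lift_linear_eq
  by (simp add: sum_distrib_left sum.swap[of _ P] sum_negf)

definition f_z_deriv :: "nat \<Rightarrow> (nat \<Rightarrow> nat) \<Rightarrow> ((nat \<Rightarrow> nat) \<Rightarrow> real ^ 'm) \<Rightarrow> (nat \<Rightarrow> nat)
    \<Rightarrow> (nat \<Rightarrow> real) \<Rightarrow> (nat \<Rightarrow> real) \<Rightarrow> real ^ 'm" where
  "f_z_deriv k n \<phi> z y w = (\<Sum>J\<in>idx_tuples k n.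
      (\<Sum>s<k. lift_linear n z w s (J s) * (\<Prod>r\<in>{..<k} - {s}. lift n z y r (J r))) *\<^sub>R \<phi> J)"

lemma has_vector_derivative_f_z_line:
  "((\<lambda>\<tau>. f_z k n \<phi> z (\<lambda>q. x q + \<tau> * w q)) has_vector_derivative
      f_z_deriv k n \<phi> z (\<lambda>q. x q + t * w q) w) (at t)"
proof -
  let ?a = "\<lambda>J s. lift n z x s (J s)" and ?b = "\<lambda>J s. lift_linear n z w s (J s)"
  have "((\<lambda>\<tau>. \<Prod>s<k. ?a J s + \<tau> * ?b J s) has_real_derivative
      (\<Sum>s<k. ?b J s * (\<Prod>r\<in>{..<k} - {s}. ?a J r + t * ?b J r))) (at t)" for J
    by (rule has_field_derivative_prod) (auto intro!: derivative_eq_intros)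
  from has_vector_derivative_scaleR[OF this has_vector_derivative_const]
  have "((\<lambda>\<tau>. (\<Prod>s<k. ?a J s + \<tau> * ?b J s) *\<^sub>R \<phi> J) has_vector_derivative
      (\<Sum>s<k. ?b J s * (\<Prod>r\<in>{..<k} - {s}. ?a J r + t * ?b J r)) *\<^sub>R \<phi> J) (at t)" for J
    by simp
  then show ?thesis
    unfolding f_z_def fourier_def f_z_deriv_def lift_add_scaled
    by (intro has_vector_derivative_sum)
qed

lemma f_z_deriv_linear:
  assumes "\<forall>q\<ge>N. v q = 0"
  shows "(\<Sum>p<N. v p *\<^sub>R f_z_deriv k n \<phi> z y (indicator {p})) = f_z_deriv k n \<phi> z y v"
proof -
  let ?Q = "\<lambda>J s. \<Prod>r\<in>{..<k} - {s}. lift n z y r (J r)"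
  have "(\<Sum>p<N. v p *\<^sub>R f_z_deriv k n \<phi> z y (indicator {p}))
      = (\<Sum>J\<in>idx_tuples k n.
          (\<Sum>p<N. v p * (\<Sum>s<k. lift_linear n z (indicator {p}) s (J s) * ?Q J s)) *\<^sub>R \<phi> J)"
    unfolding f_z_deriv_def scaleR_sum_right scaleR_scaleR
    by (subst sum.swap) (simp only: scaleR_sum_left)
  also have "\<dots> = (\<Sum>J\<in>idx_tuples k n.
      (\<Sum>s<k. lift_linear n z (\<lambda>q. \<Sum>p<N. v p * indicator {p} q) s (J s) * ?Q J s) *\<^sub>R \<phi> J)"
    unfolding lift_linear_sum
    by (simp add: sum_distrib_left sum_distrib_right mult.assoc sum.swap[of _ "{..<N}"])
  also have "\<dots> = f_z_deriv k n \<phi> z y v"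
    unfolding sum_indicator_singleton[OF assms] f_z_deriv_def ..
  finally show ?thesis .
qed

lemma has_real_derivative_comp_vector:
  fixes \<pi> :: "'a::real_normed_vector \<Rightarrow> real"
  assumes "(p has_vector_derivative V) (at t)" and "\<pi> differentiable (at (p t))"
  shows "((\<lambda>\<tau>. \<pi> (p \<tau>)) has_real_derivative frechet_derivative \<pi> (at (p t)) V) (at t)"
proof -
  let ?D = "frechet_derivative \<pi> (at (p t))"
  have D: "(\<pi> has_derivative ?D) (at (p t))"
    using assms(2) frechet_derivative_works by blast
  have "((\<pi> \<circ> p) has_derivative (?D \<circ> (\<lambda>h. h *\<^sub>R V))) (at t)"
    using diff_chain_at[OF assms(1)[unfolded has_vector_derivative_def] D] .
  moreover have "?D \<circ> (\<lambda>h. h *\<^sub>R V) = (*) (?D V)"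
    using linear_cmul[OF has_derivative_linear[OF D]] by (auto simp: fun_eq_iff)
  ultimately show ?thesis
    unfolding has_field_derivative_def comp_def by simp
qed

lemma partial_deriv_comp_f_z:
  fixes \<pi> :: "real ^ 'm \<Rightarrow> real"
  assumes "\<forall>y. \<pi> differentiable (at y)"
  shows "partial_deriv (\<pi> \<circ> f_z k n \<phi> z) p y =
         frechet_derivative \<pi> (at (f_z k n \<phi> z y)) (f_z_deriv k n \<phi> z y (indicator {p}))"
proof -
  have line: "y(p := y p + h) = (\<lambda>q. y q + h * indicator {p} q)" for h
    by (auto simp: fun_eq_iff indicator_def)
  have "((\<lambda>\<tau>. \<pi> (f_z k n \<phi> z (\<lambda>q. y q + \<tau> * indicator {p} q))) has_real_derivative
         frechet_derivative \<pi> (at (f_z k n \<phi> z y)) (f_z_deriv k n \<phi> z y (indicator {p}))) (at 0)"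
    using has_real_derivative_comp_vector[OF has_vector_derivative_f_z_line assms[rule_format],
        where t = 0]
    by simp
  then show ?thesis
    unfolding partial_deriv_def line comp_def by (rule DERIV_imp_deriv)
qed

text \<open>
  partial_deriv only sees coordinate lines; the derivative along an arbitrary line is
  recovered from them because the directional derivative of f_z is linear in the direction.
\<close>
lemma has_real_derivative_comp_f_z_line:
  fixes \<pi> :: "real ^ 'm \<Rightarrow> real"
  assumes "\<forall>y. \<pi> differentiable (at y)" and "\<forall>q\<ge>N. v q = 0"
  shows "((\<lambda>\<tau>. \<pi> (f_z k n \<phi> z (\<lambda>q. x q + \<tau> * v q))) has_real_derivative
           (\<Sum>p<N. v p * partial_deriv (\<pi> \<circ> f_z k n \<phi> z) p (\<lambda>q. x q + t * v q))) (at t)"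
proof -
  let ?y = "\<lambda>q. x q + t * v q"
  let ?D = "frechet_derivative \<pi> (at (f_z k n \<phi> z ?y))"
  have lin: "linear ?D"
    using assms(1) frechet_derivative_works has_derivative_linear by blast
  have "(\<Sum>p<N. v p * partial_deriv (\<pi> \<circ> f_z k n \<phi> z) p ?y)
      = ?D (\<Sum>p<N. v p *\<^sub>R f_z_deriv k n \<phi> z ?y (indicator {p}))"
    by (simp add: partial_deriv_comp_f_z[OF assms(1)] linear_sum[OF lin] linear_cmul[OF lin])
  also have "\<dots> = ?D (f_z_deriv k n \<phi> z ?y v)"
    by (simp add: f_z_deriv_linear[OF assms(2)])
  finally show ?thesis
    using has_real_derivative_comp_vector[OF has_vector_derivative_f_z_line assms(1)[rule_format]]
    by simp
qed

lemma C_set_segment: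
  assumes "\<forall>i<k. z i < n i" and x: "x \<in> C_set k n z" and y: "y \<in> C_set k n z"
    and "0 \<le> \<tau>" "\<tau> \<le> 1"
  shows "(\<lambda>q. x q + \<tau> * (y q - x q)) \<in> C_set k n z"
proof -
  have convex_comb: "lift n z (\<lambda>q. x q + \<tau> * (y q - x q)) i j
      = (1 - \<tau>) * lift n z x i j + \<tau> * lift n z y i j" for i j
    using lift_add_scaled[of n z x 1 "\<lambda>q. y q - x q" i j] lift_add_scaled[of n z x \<tau> "\<lambda>q. y q - x q" i j]
    by (simp add: algebra_simps)
  have pos: "0 < lift n z x i (z i)" "0 < lift n z y i (z i)" if "i < k" for i
    using x y that assms(1) unfolding C_set_def by (auto simp: order_le_neq_trans)
  have "0 < (1 - \<tau>) * lift n z x i (z i) + \<tau> * lift n z y i (z i)" if "i < k" for i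
    using pos[OF that] assms(4,5)
    by (cases "\<tau> = 0") (auto intro: add_nonneg_pos)
  moreover have "0 \<le> (1 - \<tau>) * lift n z x i j + \<tau> * lift n z y i j" if "i < k" "j < n i" for i j
    using x y that assms(4,5) unfolding C_set_def by simp
  ultimately show ?thesis
    using x y unfolding C_set_def by (auto simp: convex_comb) (metis less_irrefl)
qed

lemma inj_on_f_z_C_set:
  fixes \<phi> :: "(nat \<Rightarrow> nat) \<Rightarrow> real ^ 'm"
  assumes "\<forall>i<k. z i < n i"
    and Sens: "S_set (NN k n) \<subseteq> Sens (NN k n) (C_set k n z) (f_z k n \<phi> z)"
  shows "inj_on (f_z k n \<phi> z) (C_set k n z)"
proof (rule inj_onI, rule ccontr)
  let ?N = "NN k n" and ?C = "C_set k n z" and ?F = "f_z k n \<phi> z"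
  fix x y assume x: "x \<in> ?C" and y: "y \<in> ?C" and eq: "?F x = ?F y" and "x \<noteq> y"
  define v where "v = (\<lambda>q. y q - x q)"
  have v_supp: "\<forall>q\<ge>?N. v q = 0"
    using x y unfolding v_def C_set_def by simp
  have "\<exists>p<?N. v p \<noteq> 0"
    using \<open>x \<noteq> y\<close> v_supp unfolding v_def by (metis eq_iff_diff_eq_0 ext not_le)
  moreover obtain \<pi> :: "real ^ 'm \<Rightarrow> real" where \<pi>: "\<forall>y. \<pi> differentiable (at y)"
    and "eliminates ?N (Sign_on ?N ?C (\<pi> \<circ> ?F)) (sign_pattern ?N v)"
    using Sens sign_pattern_in_S_set[OF calculation] unfolding Sens_def by blast
  ultimately obtain c where c: "\<forall>x\<in>?C. 0 < c * (\<Sum>p<?N. v p * partial_deriv (\<pi> \<circ> ?F) p x)"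
    using eliminates_sign_pattern_imp_directional_pos by blast
  define h where "h = (\<lambda>\<tau>. c * \<pi> (?F (\<lambda>q. x q + \<tau> * v q)))"
  have "h 0 < h 1"
  proof (rule DERIV_pos_imp_increasing[OF zero_less_one])
    fix \<tau> :: real assume "0 \<le> \<tau>" "\<tau> \<le> 1"
    then have "(\<lambda>q. x q + \<tau> * v q) \<in> ?C"
      unfolding v_def using C_set_segment assms(1) x y by blast
    then show "\<exists>d. (h has_real_derivative d) (at \<tau>) \<and> 0 < d"
      using c DERIV_cmult[OF has_real_derivative_comp_f_z_line[OF \<pi> v_supp], of c]
      unfolding h_def by blast
  qed
  moreover have "(\<lambda>q. x q + 0 * v q) = x" "(\<lambda>q. x q + 1 * v q) = y"
    unfolding v_def by auto
  ultimately show False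
    using eq unfolding h_def by simp
qed

theorem corollary3p2:
  fixes k :: nat and n :: "nat \<Rightarrow> nat" and \<phi> :: "(nat \<Rightarrow> nat) \<Rightarrow> real ^ 'm"
  assumes "k \<ge> 1"
    and "\<forall>i<k. n i \<ge> 1"
    and "cs k n \<phi> = real (NN k n)"
  shows "inj_on (fourier k n \<phi>) (open_simplex_prod k n)"
proof -
  obtain z where "z \<in> idx_tuples k n"
    and Sens: "S_set (NN k n) \<subseteq> Sens (NN k n) (C_set k n z) (f_z k n \<phi> z)"
    using cs_eq_NN_imp_S_set_subset_Sens[OF assms(2,3)] .
  then have z: "\<forall>i<k. z i < n i"
    by (auto simp: idx_tuples_def PiE_iff)
  have "drop_coords k n z ` open_simplex_prod k n \<subseteq> C_set k n z"
    using drop_coords_in_C_set[OF assms(2) z] by blast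
  then have "inj_on (f_z k n \<phi> z \<circ> drop_coords k n z) (open_simplex_prod k n)"
    using inj_on_drop_coords[OF z] inj_on_subset[OF inj_on_f_z_C_set[OF z Sens]]
    by (intro comp_inj_on)
  moreover have "inj_on (fourier k n \<phi>) (open_simplex_prod k n)
      = inj_on (f_z k n \<phi> z \<circ> drop_coords k n z) (open_simplex_prod k n)"
    by (rule inj_on_cong) (simp add: fourier_eq_f_z_drop_coords[OF z])
  ultimately show ?thesis
    by simp
qed

end
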